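(* Let $W$ be an admissible sequence of vertices and $I$ an admissible sequence of indices with $0\le|W|=|I|\le|V|-2$, let $Z$ be a complex $|E|\times\frac{k(k+1)}2$ matrix, and let $\epsilon>0$ and $0\le\theta<2\pi/3$ be reals with $\epsilon<\cos(\theta/2)$. Suppose that for any two vertices $u,v\in V$ and any $i,j\in\{1,\dots,k\}$ such that $(W,u,v)$ and $(I,i,j)$ are admissible, we have $\mathcal{Q}^{(W,u,v)}_{(I,i,j)}(Z)\ne0$, $\mathcal{Q}^{(W,u,v)}_{(I,j,i)}(Z)\ne0$ and $$\left|\frac{\mathcal{Q}^{(W,u,v)}_{(I,i,j)}(Z)}{\mathcal{Q}^{(W,u,v)}_{(I,j,i)}(Z)}-1\right|\le\epsilon.$$ (1) Suppose in addition that for any $u,v\in V$ and any $i,j_1,j_2\in\{1,\dots,k\}$ such that $(W,u,v)$, $(I,i,j_1)$, $(I,i,j_2)$ are admissible, the angle between $\mathcal{Q}^{(W,u,v)}_{(I,i,j_1)}(Z)$ and $\mathcal{Q}^{(W,u,v)}_{(I,i,j_2)}(Z)$ does not exceed $\theta$. Then for any $u,v\in V$ and any $i$ such that $(W,u)$, $(W,v)$, $(I,i)$ are admissible, we have $\mathcal{Q}^{(W,u)}_{(I,i)}(Z)\ne0$, $\mathcal{Q}^{(W,v)}_{(I,i)}(Z)\ne0$, and the angle between them does not exceed $\arcsin\frac{\epsilon}{\cos(\theta/2)}$. (2) Suppose instead that for any $u,v_1,v_2\in V$ and any $i,j\in\{1,\dots,k\}$ such that $(W,u,v_1)$, $(W,u,v_2)$,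 $(I,i,j)$ are admissible, the angle between $\mathcal{Q}^{(W,u,v_1)}_{(I,i,j)}(Z)$ and $\mathcal{Q}^{(W,u,v_2)}_{(I,i,j)}(Z)$ does not exceed $\theta$. Then for any $u\in V$ and any $i,j$ such that $(W,u)$, $(I,i)$, $(I,j)$ are admissible, we have $\mathcal{Q}^{(W,u)}_{(I,i)}(Z)\ne0$, $\mathcal{Q}^{(W,u)}_{(I,j)}(Z)\ne0$, and the angle between them does not exceed $\arcsin\frac{\epsilon}{\cos(\theta/2)}$.
   Context: Fix a finite simple undirected graph $G=(V,E)$ and positive integers $m=(\mu_1,\dots,\mu_k)$ with $\sum\mu_i=|V|$. A complex $|E|\times\frac{k(k+1)}2$ matrix $Z=(z^{uv}_{ij})$ has entries indexed by edges $\{u,v\}\in E$ and unordered pairs $\{i,j\}$, $1\le i,j\le k$. A sequence $W=(v_1,\dots,v_n)$ of vertices is admissible if the $v_j$ are distinct. For a sequence $I=(i_1,\dots,i_n)$ of indices in $\{1,\dots,k\}$, $\nu_i(I)=|\{j: i_j=i\}|$; $I$ is admissible if $\nu_i(I)\le\mu_i$ for all $i$. For admissible $W=(v_1,\dots,v_n)$, $I=(i_1,\dots,i_n)$ of equal length, $$\mathcal{Q}^W_I(Z)=\sum_{\substack{\phi:V\to\{1,\dots,k\}\\ |\phi^{-1}(i)|=\mu_i\ (i=1,\dots,k)\\ \phi(v_j)=i_j\ (j=1,\dots,n)}}\ \prod_{\{u,v\}\in E} z^{uv}_{\phi(u)\phi(v)}.$$ $(W,v)$ denotes $W$ with vertex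 $v$ appended, $(I,i)$ denotes $I$ with index $i$ appended, and similarly for several elements. Angles are between nonzero complex numbers regarded as vectors in $\mathbb{R}^2\cong\mathbb{C}$. *)

theory Defs
  imports "HOL-Analysis.Analysis" "HOL-Library.FuncSet"
begin

definition simple_graph :: "'a set \<Rightarrow> 'a set set \<Rightarrow> bool" where
  "simple_graph V E \<longleftrightarrow> finite V \<and>
     (\<forall>e\<in>E. \<exists>u v. u \<in> V \<and> v \<in> V \<and> u \<noteq> v \<and> e = {u, v})"

definition valid_mults :: "'a set \<Rightarrow> nat \<Rightarrow> (nat \<Rightarrow> nat) \<Rightarrow> bool" where
  "valid_mults V k mu \<longleftrightarrow> (\<forall>i\<in>{1..k}. mu i > 0) \<and> (\<Sum>i=1..k. mu i) = card V"

definition adm_vertices :: "'a set \<Rightarrow> 'a list \<Rightarrow> bool" where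
  "adm_vertices V W \<longleftrightarrow> distinct W \<and> set W \<subseteq> V"

definition nu :: "nat \<Rightarrow> nat list \<Rightarrow> nat" where
  "nu i I = length (filter (\<lambda>x. x = i) I)"

definition adm_indices :: "nat \<Rightarrow> (nat \<Rightarrow> nat) \<Rightarrow> nat list \<Rightarrow> bool" where
  "adm_indices k mu I \<longleftrightarrow> set I \<subseteq> {1..k} \<and> (\<forall>i\<in>{1..k}. nu i I \<le> mu i)"

text \<open>Matrix Z: entries indexed by an edge (2-set of vertices) and an unordered
  pair of indices (a set {i,j}, possibly a singleton when i = j).\<close>
definition Qpoly :: "'a set \<Rightarrow> 'a set set \<Rightarrow> nat \<Rightarrow> (nat \<Rightarrow> nat) \<Rightarrow>
    ('a set \<Rightarrow> nat set \<Rightarrow> complex) \<Rightarrow> 'a list \<Rightarrow> nat list \<Rightarrow> complex" where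
  "Qpoly V E k mu Z W I =
     (\<Sum>\<phi> \<in> {\<phi>. \<phi> \<in> V \<rightarrow>\<^sub>E {1..k} \<and> (\<forall>i\<in>{1..k}. card {v\<in>V. \<phi> v = i} = mu i)
                \<and> (\<forall>j<length W. \<phi> (W ! j) = I ! j)}.
        \<Prod>e\<in>E. Z e (\<phi> ` e))"

definition cangle :: "complex \<Rightarrow> complex \<Rightarrow> real" where
  "cangle a b = arccos ((a \<bullet> b) / (cmod a * cmod b))"

end

theory Submission
  imports Defs
begin

text \<open>
  Both parts rest on one planar estimate. Nonzero complex numbers \<open>a\<^sub>j\<close> that are pairwise
  within angle \<open>\<theta> < 2\<pi>/3\<close> lie in an arc of width \<open>\<theta>\<close>, so
  \<open>|\<Sum> a\<^sub>j| \<ge> cos (\<theta>/2) \<Sum> |a\<^sub>j|\<close>. If moreover \<open>|b\<^sub>j - a\<^sub>j| \<le> \<epsilon> |a\<^sub>j|\<close>, then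
  \<open>|\<Sum> b\<^sub>j - \<Sum> a\<^sub>j| \<le> (\<epsilon> / cos (\<theta>/2)) |\<Sum> a\<^sub>j|\<close>, and a relative perturbation of size
  \<open>r < 1\<close> turns a complex number by an angle of at most \<open>arcsin r\<close>.

  Write \<open>Q(W u, I i)\<close> for \<open>Qpoly V E k mu Z (W @ [u]) (I @ [i])\<close>. For (1), fixing the
  colour of one more vertex gives \<open>Q(W u, I i) = \<Sum>\<^sub>j Q(W u v, I i j)\<close> and
  \<open>Q(W v, I i) = \<Sum>\<^sub>j Q(W u v, I j i)\<close>. For (2), summing over the extra vertex counts each colouring once per remaining vertex of
  colour \<open>j\<close>: \<open>\<Sum>\<^sub>v Q(W u v, I i j) = (\<mu>\<^sub>j - \<nu>\<^sub>j(I i)) Q(W u, I i)\<close>, and positive factors do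
  not change angles. In both cases the two sums differ termwise by swapping the last two
  indices, which is what the hypothesis controls.
\<close>

section \<open>Angles between complex numbers\<close>

lemma inner_div_norms_bounds:
  "-1 \<le> (a \<bullet> b) / (norm a * norm b)" "(a \<bullet> b) / (norm a * norm b) \<le> 1"
proof -
  have "\<bar>a \<bullet> b\<bar> \<le> norm a * norm b" by (rule Cauchy_Schwarz_ineq2)
  then have "\<bar>(a \<bullet> b) / (norm a * norm b)\<bar> \<le> 1"
    by (cases "norm a * norm b = 0") (simp_all add: abs_divide divide_le_eq_1)
  then show "-1 \<le> (a \<bullet> b) / (norm a * norm b)" "(a \<bullet> b) / (norm a * norm b) \<le> 1"
    unfolding abs_le_iff by linarith+
qed

lemma cos_cangle: "cos (cangle a b) = (a \<bullet> b) / (norm a * norm b)"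
  unfolding cangle_def by (rule cos_arccos) (rule inner_div_norms_bounds)+

lemma cangle_bounds: "0 \<le> cangle a b" "cangle a b \<le> pi"
  unfolding cangle_def using arccos_lbound arccos_ubound inner_div_norms_bounds by blast+

lemma cos_le_inner_if_cangle_le:
  assumes "cangle a b \<le> \<theta>" "\<theta> \<le> pi"
  shows "cos \<theta> \<le> (a \<bullet> b) / (norm a * norm b)"
  using cos_monotone_0_pi_le[of "cangle a b" \<theta>] assms cangle_bounds[of a b]
  by (simp add: cos_cangle)

lemma cangle_self: "a \<noteq> 0 \<Longrightarrow> cangle a a = 0"
  unfolding cangle_def by (simp add: power2_norm_eq_inner[symmetric] power2_eq_square)

lemma cangle_scaleR:
  assumes "0 < c" "0 < d"
  shows "cangle (c *\<^sub>R a) (d *\<^sub>R b) = cangle a b"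
  using assms unfolding cangle_def by simp

lemma cangle_rotate:
  fixes a b :: complex
  assumes "a \<noteq> 0"
  shows "cangle a b = cangle 1 (b / a)"
proof -
  have "b / a = (b * cnj a) / of_real (norm a ^ 2)" by (rule complex_div_cnj)
  then have "Re (b / a) = (a \<bullet> b) / norm a ^ 2"
    by (simp add: inner_complex_def Re_divide_of_real algebra_simps)
  moreover have "norm (b / a) = norm b / norm a" by (rule norm_divide)
  ultimately have "Re (b / a) / norm (b / a) = (a \<bullet> b) / (norm a * norm b)"
    using assms by (cases "b = 0") (simp_all add: power2_eq_square)
  then show ?thesis unfolding cangle_def by simp
qed

lemma cangle_1_le_arcsin:
  fixes w :: complex
  assumes w: "norm (w - 1) \<le> r" and r: "0 \<le> r" "r < 1"
  shows "w \<noteq> 0 \<and> cangle 1 w \<le> arcsin r"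
proof -
  have sq: "(Re w - 1)^2 + (Im w)^2 \<le> r^2"
    using power_mono[OF w norm_ge_zero, of 2] by (simp add: cmod_power2)
  have "\<bar>Re w - 1\<bar> \<le> r" using abs_Re_le_cmod[of "w - 1"] w by simp
  then have Re_pos: "0 < Re w" using r by linarith
  then have w0: "w \<noteq> 0" by auto
  have "(1 - r^2) * (Im w)^2 \<le> (1 - r^2) * (r^2 - (Re w - 1)^2)"
    using sq r by (intro mult_left_mono) (auto simp: power_le_one)
  also have "\<dots> = r^2 * (Re w)^2 - (Re w - (1 - r^2))^2"
    by (simp add: power2_eq_square algebra_simps)
  also have "\<dots> \<le> r^2 * (Re w)^2" by simp
  finally have "(1 - r^2) * norm w ^ 2 \<le> (Re w)^2"
    by (simp add: cmod_power2 algebra_simps)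
  then have "sqrt ((1 - r^2) * norm w ^ 2) \<le> sqrt ((Re w)^2)" by (rule real_sqrt_le_mono)
  then have "sqrt (1 - r^2) * norm w \<le> Re w"
    using Re_pos by (simp add: real_sqrt_mult)
  then have cos_le: "cos (arcsin r) \<le> Re w / norm w"
    using w0 r by (simp add: cos_arcsin pos_le_divide_eq)
  have "cangle 1 w = arccos (Re w / norm w)" unfolding cangle_def by simp
  also have "\<dots> \<le> arccos (cos (arcsin r))"
    using cos_le inner_div_norms_bounds[of 1 w] arccos_le_arccos[OF _ cos_le] by simp
  also have "\<dots> = arcsin r"
    using r arcsin_nonneg[of r] arcsin_ubound[of r] by (intro arccos_cos) auto
  finally show ?thesis using w0 by simp
qed

lemma cangle_le_arcsin_if_norm_diff_le:
  fixes a b :: complex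
  assumes a: "a \<noteq> 0" and ab: "norm (b - a) \<le> r * norm a" and r: "0 \<le> r" "r < 1"
  shows "b \<noteq> 0 \<and> cangle a b \<le> arcsin r"
proof -
  have "norm (b / a - 1) = norm (b - a) / norm a"
    using a by (simp add: norm_divide[symmetric] diff_divide_distrib)
  also have "\<dots> \<le> r" using a ab by (simp add: divide_le_eq)
  finally have "b / a \<noteq> 0 \<and> cangle 1 (b / a) \<le> arcsin r" by (rule cangle_1_le_arcsin[OF _ r])
  then show ?thesis using cangle_rotate[OF a] by auto
qed

lemma norm_diff_le_if_norm_div_sub_1_le:
  fixes a b :: complex
  assumes "a \<noteq> 0" "norm (b / a - 1) \<le> \<epsilon>"
  shows "norm (b - a) \<le> \<epsilon> * norm a"
proof -
  have "norm (b - a) = norm (b / a - 1) * norm a"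
    using assms(1) by (simp add: norm_mult[symmetric] left_diff_distrib)
  then show ?thesis using assms(2) by (simp add: mult_right_mono)
qed

section \<open>Sums of complex numbers in a narrow sector\<close>

text \<open>The vanishing Gram determinant of three vectors in the plane, expanded.\<close>

lemma gram_det_complex:
  fixes x u v :: complex
  shows "(x \<bullet> x) * (u \<bullet> u) * (v \<bullet> v) + 2 * (x \<bullet> u) * (u \<bullet> v) * (x \<bullet> v)
     = (x \<bullet> x) * (u \<bullet> v)^2 + (u \<bullet> u) * (x \<bullet> v)^2 + (v \<bullet> v) * (x \<bullet> u)^2"
  unfolding inner_complex_def by (simp add: power2_eq_square algebra_simps)

text \<open>
  With \<open>c = cos \<alpha>\<close>, \<open>\<alpha> < 2\<pi>/3\<close>: a unit vector within angle \<open>\<alpha>\<close> of both \<open>u\<close> and \<open>v\<close> lies on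
  the short arc between them, hence within \<open>\<alpha>/2\<close> of the bisector \<open>u + v\<close>, whose length is
  \<open>2 cos (\<alpha>/2)\<close>.
\<close>

lemma inner_bisector_ge:
  fixes x u v :: complex
  assumes "norm x = 1" "norm u = 1" "norm v = 1"
    and "u \<bullet> v = c" "c \<le> x \<bullet> u" "c \<le> x \<bullet> v" "-1/2 < c"
  shows "1 + c \<le> x \<bullet> (u + v)"
proof (rule ccontr)
  define t where "t = x \<bullet> u + x \<bullet> v"
  define d where "d = x \<bullet> u - x \<bullet> v"
  assume "\<not> ?thesis"
  then have "t < 1 + c" by (simp add: t_def inner_add_right)
  have "x \<bullet> x = 1" "u \<bullet> u = 1" "v \<bullet> v = 1"
    using assms(1-3) by (simp_all add: power2_norm_eq_inner[symmetric])
  then have ellipse: "(1 - c) * t^2 + (1 + c) * d^2 = 2 * (1 - c^2)"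
    using gram_det_complex[of x u v] assms(4)
    by (simp add: t_def d_def power2_eq_square algebra_simps)
  have "\<bar>d\<bar> \<le> t - 2 * c" using assms(5,6) by (simp add: t_def d_def)
  then have "(1 + c) * d^2 \<le> (1 + c) * (t - 2 * c)^2"
    using assms(7) by (intro mult_left_mono) (auto intro: power2_le_iff_abs_le[THEN iffD2])
  then have "0 \<le> (t - (1 + c)) * (t - (1 + c) * (2 * c - 1))"
    using ellipse by (simp add: power2_eq_square algebra_simps)
  moreover have "(1 + c) * (2 * c - 1) < t"
  proof -
    have "2 * c \<le> t" using \<open>\<bar>d\<bar> \<le> t - 2 * c\<close> by linarith
    moreover from this have "0 < (1 - c) * (1 + 2 * c)" using \<open>t < 1 + c\<close> assms(7) by simp
    ultimately show ?thesis by (simp add: algebra_simps)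
  qed
  ultimately show False using \<open>t < 1 + c\<close> by (simp add: zero_le_mult_iff)
qed

text \<open>The pair at the largest angle spans an arc containing all the \<open>e j\<close>.\<close>

lemma exists_bisector:
  fixes e :: "'j \<Rightarrow> complex"
  assumes "finite J" "J \<noteq> {}" and unit: "\<forall>j\<in>J. norm (e j) = 1"
    and close: "\<forall>p\<in>J. \<forall>q\<in>J. c\<^sub>0 \<le> e p \<bullet> e q" and "-1/2 < c\<^sub>0"
  shows "\<exists>w c. c\<^sub>0 \<le> c \<and> norm w ^ 2 = 2 + 2 * c \<and> (\<forall>j\<in>J. 1 + c \<le> e j \<bullet> w)"
proof -
  obtain p q where pq: "p \<in> J" "q \<in> J" and min: "\<forall>j\<in>J. \<forall>l\<in>J. e p \<bullet> e q \<le> e j \<bullet> e l"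
    using ex_is_arg_min_if_finite[of "J \<times> J" "\<lambda>(p, q). e p \<bullet> e q"] assms(1,2)
    by (fastforce simp: is_arg_min_linorder)
  define c where "c = e p \<bullet> e q"
  have "e p \<bullet> e p = 1" "e q \<bullet> e q = 1"
    using unit pq by (simp_all add: power2_norm_eq_inner[symmetric])
  then have "norm (e p + e q) ^ 2 = 2 + 2 * c"
    unfolding c_def power2_norm_eq_inner by (simp add: inner_add_left inner_add_right inner_commute)
  moreover have "c\<^sub>0 \<le> c" using close pq unfolding c_def by blast
  moreover have "1 + c \<le> e j \<bullet> (e p + e q)" if "j \<in> J" for j
    using that pq unit min \<open>c\<^sub>0 \<le> c\<close> assms(5) unfolding c_def
    by (intro inner_bisector_ge) (auto simp: inner_commute)
  ultimately show ?thesis by blast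
qed

lemma norm_sum_ge_cos_half_angle:
  fixes a :: "'j \<Rightarrow> complex"
  assumes fin: "finite J" and nz: "\<forall>j\<in>J. a j \<noteq> 0"
    and angle: "\<forall>p\<in>J. \<forall>q\<in>J. cangle (a p) (a q) \<le> \<theta>" and \<theta>: "0 \<le> \<theta>" "\<theta> < 2*pi/3"
  shows "cos (\<theta>/2) * (\<Sum>j\<in>J. norm (a j)) \<le> norm (sum a J)"
proof (cases "J = {}")
  case False
  define e where "e j = sgn (a j)" for j
  have unit: "\<forall>j\<in>J. norm (e j) = 1" using nz by (simp add: e_def norm_sgn)
  have "e p \<bullet> e q = (a p \<bullet> a q) / (norm (a p) * norm (a q))" for p q
    by (simp add: e_def sgn_div_norm field_simps)
  then have close: "\<forall>p\<in>J. \<forall>q\<in>J. cos \<theta> \<le> e p \<bullet> e q"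
    using angle \<theta> cos_le_inner_if_cangle_le by simp
  have "cos (2*pi/3) < cos \<theta>" using \<theta> by (intro cos_monotone_0_pi) auto
  then have "-1/2 < cos \<theta>" by (simp add: cos_120)
  then obtain w c where c: "cos \<theta> \<le> c" and w: "norm w ^ 2 = 2 + 2 * c"
      and ew: "\<forall>j\<in>J. 1 + c \<le> e j \<bullet> w"
    using exists_bisector[OF fin False unit close] by blast
  define S where "S = (\<Sum>j\<in>J. norm (a j))"
  have "(1 + c) * S = (\<Sum>j\<in>J. norm (a j) * (1 + c))"
    unfolding S_def by (simp add: sum_distrib_left mult.commute)
  also have "\<dots> \<le> (\<Sum>j\<in>J. norm (a j) * (e j \<bullet> w))"
    using ew by (intro sum_mono mult_left_mono) auto
  also have "\<dots> = sum a J \<bullet> w"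
    using nz by (auto simp: inner_sum_left e_def sgn_div_norm intro!: sum.cong)
  also have "\<dots> \<le> norm (sum a J) * norm w" by (rule norm_cauchy_schwarz)
  finally have "((1 + c) * S)^2 \<le> (norm (sum a J) * norm w)^2"
    using \<open>-1/2 < cos \<theta>\<close> c by (intro power_mono) (auto simp: S_def sum_nonneg)
  moreover have "((1 + c) * S)^2 = (1 + c) * ((1 + c) * S^2)"
    by (simp add: power2_eq_square)
  moreover have "(norm (sum a J) * norm w)^2 = (1 + c) * (2 * norm (sum a J) ^ 2)"
    using w by (simp add: power_mult_distrib algebra_simps)
  ultimately have "(1 + c) * S^2 \<le> 2 * norm (sum a J) ^ 2"
    using \<open>-1/2 < cos \<theta>\<close> c by simp
  moreover have "(1 + cos \<theta>) * S^2 \<le> (1 + c) * S^2"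
    using c by (intro mult_right_mono) auto
  moreover have "1 + cos \<theta> = 2 * cos (\<theta>/2) ^ 2" using cos_double_cos[of "\<theta>/2"] by simp
  ultimately have "(cos (\<theta>/2) * S)^2 \<le> norm (sum a J) ^ 2" by (simp add: power_mult_distrib)
  then show ?thesis unfolding S_def by (rule power2_le_imp_le) simp
qed simp

lemma cangle_sums_le_arcsin:
  fixes a b :: "'j \<Rightarrow> complex"
  assumes fin: "finite J" "J \<noteq> {}" and nz: "\<forall>j\<in>J. a j \<noteq> 0"
    and close: "\<forall>j\<in>J. norm (b j - a j) \<le> \<epsilon> * norm (a j)"
    and angle: "\<forall>p\<in>J. \<forall>q\<in>J. cangle (a p) (a q) \<le> \<theta>" and \<theta>: "0 \<le> \<theta>" "\<theta> < 2*pi/3"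
    and \<epsilon>: "0 \<le> \<epsilon>" "\<epsilon> < cos (\<theta>/2)"
  shows "sum a J \<noteq> 0 \<and> sum b J \<noteq> 0 \<and> cangle (sum a J) (sum b J) \<le> arcsin (\<epsilon> / cos (\<theta>/2))"
proof -
  define S where "S = (\<Sum>j\<in>J. norm (a j))"
  have cos_pos: "0 < cos (\<theta>/2)" using \<epsilon> by linarith
  have "0 < S" unfolding S_def using fin nz by (intro sum_pos) auto
  have cone: "cos (\<theta>/2) * S \<le> norm (sum a J)"
    unfolding S_def by (rule norm_sum_ge_cos_half_angle[OF fin(1) nz angle \<theta>])
  moreover have "0 < cos (\<theta>/2) * S" using cos_pos \<open>0 < S\<close> by simp
  ultimately have "sum a J \<noteq> 0" by auto
  have "norm (sum b J - sum a J) \<le> (\<Sum>j\<in>J. norm (b j - a j))"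
    unfolding sum_subtractf[symmetric] by (rule norm_sum)
  also have "\<dots> \<le> \<epsilon> * S" unfolding S_def sum_distrib_left using close by (intro sum_mono) auto
  also have "\<dots> = \<epsilon> / cos (\<theta>/2) * (cos (\<theta>/2) * S)" using cos_pos by simp
  also have "\<dots> \<le> \<epsilon> / cos (\<theta>/2) * norm (sum a J)" using cone cos_pos \<epsilon> by (intro mult_left_mono) auto
  finally have "norm (sum b J - sum a J) \<le> \<epsilon> / cos (\<theta>/2) * norm (sum a J)" .
  moreover have "0 \<le> \<epsilon> / cos (\<theta>/2)" "\<epsilon> / cos (\<theta>/2) < 1" using cos_pos \<epsilon> by simp_all
  ultimately show ?thesis
    using cangle_le_arcsin_if_norm_diff_le[OF \<open>sum a J \<noteq> 0\<close>] \<open>sum a J \<noteq> 0\<close> by blast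
qed

section \<open>Colourings and admissible sequences\<close>

definition balanced_colourings :: "'a set \<Rightarrow> nat \<Rightarrow> (nat \<Rightarrow> nat) \<Rightarrow> ('a \<Rightarrow> nat) set" where
  "balanced_colourings V k mu = {\<phi> \<in> V \<rightarrow>\<^sub>E {1..k}. \<forall>i\<in>{1..k}. card {v\<in>V. \<phi> v = i} = mu i}"

lemma finite_balanced_colourings: "finite V \<Longrightarrow> finite (balanced_colourings V k mu)"
  by (rule finite_subset[of _ "V \<rightarrow>\<^sub>E {1..k}"])
    (auto simp: balanced_colourings_def intro: finite_PiE)

lemma Qpoly_eq_sum_balanced_colourings:
  assumes "length W = length I"
  shows "Qpoly V E k mu Z W I =
    (\<Sum>\<phi> | \<phi> \<in> balanced_colourings V k mu \<and> map \<phi> W = I. \<Prod>e\<in>E. Z e (\<phi> ` e))"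
proof -
  have "(\<forall>j<length W. \<phi> (W ! j) = I ! j) \<longleftrightarrow> map \<phi> W = I" for \<phi> :: "'a \<Rightarrow> nat"
    using assms by (auto simp: list_eq_iff_nth_eq)
  then show ?thesis unfolding Qpoly_def balanced_colourings_def by (simp add: conj_assoc)
qed

lemma Qpoly_split_vertex:
  assumes "finite V" "v \<in> V" "length W = length I"
  shows "Qpoly V E k mu Z W I = (\<Sum>j\<in>{1..k}. Qpoly V E k mu Z (W @ [v]) (I @ [j]))"
proof -
  let ?f = "\<lambda>\<phi>. \<Prod>e\<in>E. Z e (\<phi> ` e)"
  let ?C = "{\<phi> \<in> balanced_colourings V k mu. map \<phi> W = I}"
  have "(\<Sum>j\<in>{1..k}. Qpoly V E k mu Z (W @ [v]) (I @ [j])) =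
      (\<Sum>j\<in>{1..k}. \<Sum>\<phi> | \<phi> \<in> ?C \<and> \<phi> v = j. ?f \<phi>)"
    using assms(3) by (simp add: Qpoly_eq_sum_balanced_colourings conj_assoc)
  also have "\<dots> = sum ?f ?C"
  proof (rule sum.group)
    show "finite ?C"
      using finite_balanced_colourings[OF assms(1)] by (rule finite_subset[rotated]) auto
    show "(\<lambda>\<phi>. \<phi> v) ` ?C \<subseteq> {1..k}" using assms(2) by (auto simp: balanced_colourings_def)
  qed simp
  finally show ?thesis using assms(3) by (simp add: Qpoly_eq_sum_balanced_colourings)
qed

lemma nu_map_distinct: "distinct W \<Longrightarrow> nu j (map \<phi> W) = card {v \<in> set W. \<phi> v = j}"
  unfolding nu_def by (simp add: filter_map comp_def distinct_card[symmetric])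

lemma adm_indices_if_balanced:
  assumes "finite V" "adm_vertices V W" "\<phi> \<in> balanced_colourings V k mu"
  shows "adm_indices k mu (map \<phi> W)"
  unfolding adm_indices_def
proof
  show "set (map \<phi> W) \<subseteq> {1..k}"
    using assms(2,3) by (auto simp: adm_vertices_def balanced_colourings_def)
  show "\<forall>i\<in>{1..k}. nu i (map \<phi> W) \<le> mu i"
  proof
    fix i assume "i \<in> {1..k}"
    have "nu i (map \<phi> W) = card {v \<in> set W. \<phi> v = i}"
      using assms(2) by (simp add: nu_map_distinct adm_vertices_def)
    also have "\<dots> \<le> card {v \<in> V. \<phi> v = i}"
      using assms(1,2) by (intro card_mono) (auto simp: adm_vertices_def)
    finally show "nu i (map \<phi> W) \<le> mu i"
      using assms(3) \<open>i \<in> {1..k}\<close> by (simp add: balanced_colourings_def)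
  qed
qed

lemma Qpoly_eq_0_if_not_adm_indices:
  assumes "finite V" "adm_vertices V W" "length W = length I" "\<not> adm_indices k mu I"
  shows "Qpoly V E k mu Z W I = 0"
proof -
  have "{\<phi> \<in> balanced_colourings V k mu. map \<phi> W = I} = {}"
    using adm_indices_if_balanced[OF assms(1,2)] assms(4) by blast
  then show ?thesis unfolding Qpoly_eq_sum_balanced_colourings[OF assms(3)]
    by (simp only: sum.empty)
qed

lemma sum_Qpoly_remaining_vertices:
  assumes fin: "finite V" and W: "adm_vertices V W" and len: "length W = length I"
    and j: "j \<in> {1..k}"
  shows "(\<Sum>v\<in>V - set W. Qpoly V E k mu Z (W @ [v]) (I @ [j])) =
    of_nat (mu j - nu j I) * Qpoly V E k mu Z W I"
proof -
  let ?f = "\<lambda>\<phi>. \<Prod>e\<in>E. Z e (\<phi> ` e)"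
  let ?C = "{\<phi> \<in> balanced_colourings V k mu. map \<phi> W = I}"
  have finC: "finite ?C"
    using finite_balanced_colourings[OF fin] by (rule finite_subset[rotated]) auto
  have card: "card {v \<in> V - set W. \<phi> v = j} = mu j - nu j I" if "\<phi> \<in> ?C" for \<phi>
  proof -
    have "{v \<in> V - set W. \<phi> v = j} = {v \<in> V. \<phi> v = j} - {v \<in> set W. \<phi> v = j}" by blast
    moreover have "card {v \<in> set W. \<phi> v = j} = nu j I"
      using that W by (auto simp: nu_map_distinct adm_vertices_def)
    moreover have "card {v \<in> V. \<phi> v = j} = mu j"
      using that j by (simp add: balanced_colourings_def)
    ultimately show ?thesis
      using fin W by (simp add: card_Diff_subset finite_subset adm_vertices_def subset_iff)
  qed
  have "(\<Sum>v\<in>V - set W. Qpoly V E k mu Z (W @ [v]) (I @ [j])) =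
      (\<Sum>v\<in>V - set W. \<Sum>\<phi> | \<phi> \<in> ?C \<and> \<phi> v = j. ?f \<phi>)"
    using len by (simp add: Qpoly_eq_sum_balanced_colourings conj_assoc)
  also have "\<dots> = (\<Sum>\<phi>\<in>?C. \<Sum>v | v \<in> V - set W \<and> \<phi> v = j. ?f \<phi>)"
    using fin finC by (intro sum.swap_restrict) auto
  also have "\<dots> = (\<Sum>\<phi>\<in>?C. of_nat (mu j - nu j I) * ?f \<phi>)"
    using card by (intro sum.cong) simp_all
  finally show ?thesis using len by (simp add: Qpoly_eq_sum_balanced_colourings sum_distrib_left)
qed

lemma adm_vertices_snoc_iff: "adm_vertices V (W @ [v]) \<longleftrightarrow> adm_vertices V W \<and> v \<in> V - set W"
  by (auto simp: adm_vertices_def)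

lemma remaining_vertices_nonempty:
  assumes "finite V" "adm_vertices V W" "length W < card V"
  shows "V - set W \<noteq> {}"
proof
  assume "V - set W = {}"
  then have "card V \<le> card (set W)" by (intro card_mono) auto
  then show False using assms(2,3) by (simp add: adm_vertices_def distinct_card)
qed

lemma nu_snoc: "nu i (I @ [j]) = nu i I + (if j = i then 1 else 0)"
  by (simp add: nu_def)

lemma adm_indices_snoc_iff:
  "adm_indices k mu (I @ [j]) \<longleftrightarrow> adm_indices k mu I \<and> j \<in> {1..k} \<and> nu j I < mu j"
  by (auto simp: adm_indices_def nu_snoc split: if_splits)

lemma adm_indices_swap: "adm_indices k mu (I @ [i, j]) \<longleftrightarrow> adm_indices k mu (I @ [j, i])"
  using adm_indices_snoc_iff[of k mu "I @ [i]" j] adm_indices_snoc_iff[of k mu "I @ [j]" i]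
  by (auto simp: adm_indices_snoc_iff nu_snoc)

lemma adm_indices_pair:
  assumes "i \<noteq> j" "adm_indices k mu (I @ [i])" "adm_indices k mu (I @ [j])"
  shows "adm_indices k mu (I @ [i, j])"
  using assms adm_indices_snoc_iff[of k mu "I @ [i]" j] by (simp add: adm_indices_snoc_iff nu_snoc)

lemma sum_nu: "set I \<subseteq> {1..k} \<Longrightarrow> (\<Sum>i=1..k. nu i I) = length I"
proof (induction I rule: rev_induct)
  case (snoc j I)
  then have "(\<Sum>i=1..k. nu i (I @ [j])) = (\<Sum>i=1..k. nu i I) + 1"
    by (simp add: nu_snoc sum.distrib)
  then show ?case using snoc by simp
qed (simp add: nu_def)

lemma exists_adm_indices_snoc:
  assumes "valid_mults V k mu" "adm_indices k mu I" "length I < card V"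
  shows "\<exists>j. adm_indices k mu (I @ [j])"
proof (rule ccontr)
  assume "\<nexists>j. adm_indices k mu (I @ [j])"
  then have "mu i \<le> nu i I" if "i \<in> {1..k}" for i
    using that assms(2) by (auto simp: adm_indices_snoc_iff not_less)
  then have "(\<Sum>i=1..k. mu i) \<le> (\<Sum>i=1..k. nu i I)" by (rule sum_mono)
  moreover have "(\<Sum>i=1..k. nu i I) = length I"
    using assms(2) by (intro sum_nu) (simp add: adm_indices_def)
  ultimately show False using assms(1,3) by (simp add: valid_mults_def)
qed

lemma Qpoly_swap:
  assumes "length W = length I"
  shows "Qpoly V E k mu Z (W @ [x, y]) (I @ [i, j]) = Qpoly V E k mu Z (W @ [y, x]) (I @ [j, i])"
  using assms by (simp add: Qpoly_eq_sum_balanced_colourings conj_ac)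

lemma Qpoly_eq_sum_adm_indices:
  assumes "finite V" "adm_vertices V (W @ [u, v])" "length W = length I"
  shows "Qpoly V E k mu Z (W @ [u]) (I @ [i]) =
    (\<Sum>j | adm_indices k mu (I @ [i, j]). Qpoly V E k mu Z (W @ [u, v]) (I @ [i, j]))"
proof -
  have "v \<in> V" using assms(2) by (simp add: adm_vertices_def)
  then have "Qpoly V E k mu Z (W @ [u]) (I @ [i]) =
      (\<Sum>j\<in>{1..k}. Qpoly V E k mu Z (W @ [u, v]) (I @ [i, j]))"
    using Qpoly_split_vertex[OF assms(1), of v "W @ [u]" "I @ [i]"] assms(3) by simp
  also have "\<dots> = (\<Sum>j | adm_indices k mu (I @ [i, j]). Qpoly V E k mu Z (W @ [u, v]) (I @ [i, j]))"
  proof (rule sum.mono_neutral_right)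
    show "{j. adm_indices k mu (I @ [i, j])} \<subseteq> {1..k}" by (auto simp: adm_indices_def)
  qed (use assms in \<open>auto intro: Qpoly_eq_0_if_not_adm_indices\<close>)
  finally show ?thesis .
qed

section \<open>Summing out the last vertex or index\<close>

context
  fixes V :: "'a set" and E :: "'a set set" and k :: nat and mu :: "nat \<Rightarrow> nat"
    and Z :: "'a set \<Rightarrow> nat set \<Rightarrow> complex" and W :: "'a list" and I :: "nat list" and \<epsilon> \<theta> :: real
  assumes fin: "finite V" and mults: "valid_mults V k mu"
    and len: "length W = length I" "length W + 2 \<le> card V"
    and \<theta>: "0 \<le> \<theta>" "\<theta> < 2 * pi / 3" and \<epsilon>: "0 \<le> \<epsilon>" "\<epsilon> < cos (\<theta> / 2)"
    and swap_close: "\<And>u v i j. adm_vertices V (W @ [u, v]) \<Longrightarrow> adm_indices k mu (I @ [i, j]) \<Longrightarrow>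
      Qpoly V E k mu Z (W @ [u, v]) (I @ [i, j]) \<noteq> 0 \<and>
      norm (Qpoly V E k mu Z (W @ [u, v]) (I @ [j, i]) - Qpoly V E k mu Z (W @ [u, v]) (I @ [i, j]))
        \<le> \<epsilon> * norm (Qpoly V E k mu Z (W @ [u, v]) (I @ [i, j]))"
begin

lemma Qpoly_vertex_angle_le_distinct:
  assumes angle: "\<And>j\<^sub>1 j\<^sub>2. adm_indices k mu (I @ [i, j\<^sub>1]) \<Longrightarrow> adm_indices k mu (I @ [i, j\<^sub>2]) \<Longrightarrow>
      cangle (Qpoly V E k mu Z (W @ [u, v]) (I @ [i, j\<^sub>1]))
        (Qpoly V E k mu Z (W @ [u, v]) (I @ [i, j\<^sub>2])) \<le> \<theta>"
    and Wuv: "adm_vertices V (W @ [u, v])" and Ii: "adm_indices k mu (I @ [i])"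
  shows "Qpoly V E k mu Z (W @ [u]) (I @ [i]) \<noteq> 0 \<and> Qpoly V E k mu Z (W @ [v]) (I @ [i]) \<noteq> 0 \<and>
    cangle (Qpoly V E k mu Z (W @ [u]) (I @ [i])) (Qpoly V E k mu Z (W @ [v]) (I @ [i]))
      \<le> arcsin (\<epsilon> / cos (\<theta> / 2))"
proof -
  define J where "J = {j. adm_indices k mu (I @ [i, j])}"
  define a where "a j = Qpoly V E k mu Z (W @ [u, v]) (I @ [i, j])" for j
  define b where "b j = Qpoly V E k mu Z (W @ [u, v]) (I @ [j, i])" for j
  have "adm_vertices V (W @ [v, u])" using Wuv by (auto simp: adm_vertices_def)
  then have "Qpoly V E k mu Z (W @ [v]) (I @ [i]) = sum b J"
    unfolding J_def b_def
      using Qpoly_eq_sum_adm_indices[OF fin _ len(1)] Qpoly_swap[OF len(1)] by simp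
  moreover have "Qpoly V E k mu Z (W @ [u]) (I @ [i]) = sum a J"
    unfolding J_def a_def using Qpoly_eq_sum_adm_indices[OF fin Wuv len(1)] by simp
  moreover have "sum a J \<noteq> 0 \<and> sum b J \<noteq> 0 \<and> cangle (sum a J) (sum b J) \<le> arcsin (\<epsilon> / cos (\<theta> / 2))"
  proof (rule cangle_sums_le_arcsin)
    show "finite J" unfolding J_def
      by (rule finite_subset[of _ "{1..k}"]) (auto simp: adm_indices_def)
    show "J \<noteq> {}" using exists_adm_indices_snoc[OF mults Ii] len unfolding J_def by simp
  qed (use swap_close[OF Wuv] angle \<theta> \<epsilon> in \<open>auto simp: J_def a_def b_def\<close>)
  ultimately show ?thesis by simp
qed

lemma Qpoly_index_angle_le_distinct:
  assumes angle: "\<And>v\<^sub>1 v\<^sub>2. adm_vertices V (W @ [u, v\<^sub>1]) \<Longrightarrow> adm_vertices V (W @ [u, v\<^sub>2]) \<Longrightarrow>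
      cangle (Qpoly V E k mu Z (W @ [u, v\<^sub>1]) (I @ [i, j]))
        (Qpoly V E k mu Z (W @ [u, v\<^sub>2]) (I @ [i, j])) \<le> \<theta>"
    and Wu: "adm_vertices V (W @ [u])" and Iij: "adm_indices k mu (I @ [i, j])"
  shows "Qpoly V E k mu Z (W @ [u]) (I @ [i]) \<noteq> 0 \<and> Qpoly V E k mu Z (W @ [u]) (I @ [j]) \<noteq> 0 \<and>
    cangle (Qpoly V E k mu Z (W @ [u]) (I @ [i])) (Qpoly V E k mu Z (W @ [u]) (I @ [j]))
      \<le> arcsin (\<epsilon> / cos (\<theta> / 2))"
proof -
  define R where "R = V - set (W @ [u])"
  define a where "a v = Qpoly V E k mu Z (W @ [u, v]) (I @ [i, j])" for v
  define b where "b v = Qpoly V E k mu Z (W @ [u, v]) (I @ [j, i])" for v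
  define m\<^sub>i where "m\<^sub>i = mu j - nu j (I @ [i])"
  define m\<^sub>j where "m\<^sub>j = mu i - nu i (I @ [j])"
  have "0 < m\<^sub>i" "0 < m\<^sub>j"
    using Iij adm_indices_swap[of k mu I i j] adm_indices_snoc_iff[of k mu "I @ [i]" j]
      adm_indices_snoc_iff[of k mu "I @ [j]" i] unfolding m\<^sub>i_def m\<^sub>j_def by simp_all
  have ij: "i \<in> {1..k}" "j \<in> {1..k}" using Iij by (auto simp: adm_indices_def)
  have "sum a R = of_nat m\<^sub>i * Qpoly V E k mu Z (W @ [u]) (I @ [i])"
    using sum_Qpoly_remaining_vertices[OF fin Wu, where I = "I @ [i]" and j = j] ij len
    unfolding R_def a_def m\<^sub>i_def by simp
  moreover have "sum b R = of_nat m\<^sub>j * Qpoly V E k mu Z (W @ [u]) (I @ [j])"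
    using sum_Qpoly_remaining_vertices[OF fin Wu, where I = "I @ [j]" and j = i] ij len
    unfolding R_def b_def m\<^sub>j_def by simp
  moreover have "sum a R \<noteq> 0 \<and> sum b R \<noteq> 0 \<and> cangle (sum a R) (sum b R) \<le> arcsin (\<epsilon> / cos (\<theta> / 2))"
  proof (rule cangle_sums_le_arcsin)
    show "finite R" "R \<noteq> {}"
      using remaining_vertices_nonempty[OF fin Wu] len fin unfolding R_def by auto
    have "adm_vertices V (W @ [u, v])" if "v \<in> R" for v
      using Wu that adm_vertices_snoc_iff[of V "W @ [u]" v] unfolding R_def by simp
    then show "\<forall>v\<in>R. a v \<noteq> 0" "\<forall>v\<in>R. norm (b v - a v) \<le> \<epsilon> * norm (a v)"
      "\<forall>p\<in>R. \<forall>q\<in>R. cangle (a p) (a q) \<le> \<theta>"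
      using swap_close[OF _ Iij] angle unfolding a_def b_def by blast+
  qed (use \<theta> \<epsilon> in auto)
  moreover have "cangle (of_nat m\<^sub>i * x) (of_nat m\<^sub>j * y) = cangle x y" for x y :: complex
    using cangle_scaleR[OF _ _, of "real m\<^sub>i" "real m\<^sub>j" x y] \<open>0 < m\<^sub>i\<close> \<open>0 < m\<^sub>j\<close>
    by (simp add: scaleR_conv_of_real)
  ultimately show ?thesis by simp
qed

lemma Qpoly_vertex_angle_le:
  assumes angle: "\<And>u v i j\<^sub>1 j\<^sub>2. adm_vertices V (W @ [u, v]) \<Longrightarrow> adm_indices k mu (I @ [i, j\<^sub>1]) \<Longrightarrow>
      adm_indices k mu (I @ [i, j\<^sub>2]) \<Longrightarrow>
      cangle (Qpoly V E k mu Z (W @ [u, v]) (I @ [i, j\<^sub>1]))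
        (Qpoly V E k mu Z (W @ [u, v]) (I @ [i, j\<^sub>2])) \<le> \<theta>"
    and Wu: "adm_vertices V (W @ [u])" and Wv: "adm_vertices V (W @ [v])"
    and Ii: "adm_indices k mu (I @ [i])"
  shows "Qpoly V E k mu Z (W @ [u]) (I @ [i]) \<noteq> 0 \<and> Qpoly V E k mu Z (W @ [v]) (I @ [i]) \<noteq> 0 \<and>
    cangle (Qpoly V E k mu Z (W @ [u]) (I @ [i])) (Qpoly V E k mu Z (W @ [v]) (I @ [i]))
      \<le> arcsin (\<epsilon> / cos (\<theta> / 2))"
proof (cases "u = v")
  case True
  obtain v' where "v' \<in> V - set (W @ [u])"
    using remaining_vertices_nonempty[OF fin Wu] len by auto
  then have "Qpoly V E k mu Z (W @ [u]) (I @ [i]) \<noteq> 0"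
    using Qpoly_vertex_angle_le_distinct[OF angle _ Ii] Wu adm_vertices_snoc_iff[of V "W @ [u]" v']
    by simp
  moreover have "0 \<le> arcsin (\<epsilon> / cos (\<theta> / 2))" using \<epsilon> by (intro arcsin_nonneg) auto
  ultimately show ?thesis using True by (simp add: cangle_self)
next
  case False
  then have "adm_vertices V (W @ [u, v])"
    using Wu Wv adm_vertices_snoc_iff[of V "W @ [u]" v] by (simp add: adm_vertices_snoc_iff)
  then show ?thesis using Qpoly_vertex_angle_le_distinct[OF angle _ Ii] by simp
qed

lemma Qpoly_index_angle_le:
  assumes angle: "\<And>u v\<^sub>1 v\<^sub>2 i j. adm_vertices V (W @ [u, v\<^sub>1]) \<Longrightarrow> adm_vertices V (W @ [u, v\<^sub>2]) \<Longrightarrow>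
      adm_indices k mu (I @ [i, j]) \<Longrightarrow>
      cangle (Qpoly V E k mu Z (W @ [u, v\<^sub>1]) (I @ [i, j]))
        (Qpoly V E k mu Z (W @ [u, v\<^sub>2]) (I @ [i, j])) \<le> \<theta>"
    and Wu: "adm_vertices V (W @ [u])"
    and Ii: "adm_indices k mu (I @ [i])" and Ij: "adm_indices k mu (I @ [j])"
  shows "Qpoly V E k mu Z (W @ [u]) (I @ [i]) \<noteq> 0 \<and> Qpoly V E k mu Z (W @ [u]) (I @ [j]) \<noteq> 0 \<and>
    cangle (Qpoly V E k mu Z (W @ [u]) (I @ [i])) (Qpoly V E k mu Z (W @ [u]) (I @ [j]))
      \<le> arcsin (\<epsilon> / cos (\<theta> / 2))"
proof (cases "i = j")
  case True
  obtain l where "adm_indices k mu (I @ [i, l])"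
    using exists_adm_indices_snoc[OF mults Ii] len by auto
  then have "Qpoly V E k mu Z (W @ [u]) (I @ [i]) \<noteq> 0"
    using Qpoly_index_angle_le_distinct[OF _ Wu] angle by blast
  moreover have "0 \<le> arcsin (\<epsilon> / cos (\<theta> / 2))" using \<epsilon> by (intro arcsin_nonneg) auto
  ultimately show ?thesis using True by (simp add: cangle_self)
next
  case False
  then have "adm_indices k mu (I @ [i, j])" using Ii Ij by (rule adm_indices_pair)
  then show ?thesis using Qpoly_index_angle_le_distinct[OF _ Wu] angle by blast
qed

end

theorem proposition4p3:
  fixes V :: "'a set" and E :: "'a set set" and k :: nat and mu :: "nat \<Rightarrow> nat"
    and Z :: "'a set \<Rightarrow> nat set \<Rightarrow> complex"
    and W :: "'a list" and I :: "nat list" and \<epsilon> \<theta> :: real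
  assumes G: "simple_graph V E"
    and M: "valid_mults V k mu"
    and W: "adm_vertices V W" and I: "adm_indices k mu I"
    and len: "length W = length I" "length W + 2 \<le> card V"
    and eps: "\<epsilon> > 0" and th: "0 \<le> \<theta>" "\<theta> < 2 * pi / 3" and epsth: "\<epsilon> < cos (\<theta> / 2)"
    and main: "\<And>u v i j. adm_vertices V (W @ [u, v]) \<Longrightarrow> adm_indices k mu (I @ [i, j]) \<Longrightarrow>
        Qpoly V E k mu Z (W @ [u, v]) (I @ [i, j]) \<noteq> 0 \<and>
        Qpoly V E k mu Z (W @ [u, v]) (I @ [j, i]) \<noteq> 0 \<and>
        cmod (Qpoly V E k mu Z (W @ [u, v]) (I @ [i, j]) /
              Qpoly V E k mu Z (W @ [u, v]) (I @ [j, i]) - 1) \<le> \<epsilon>"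
  shows
    "((\<forall>u v i j1 j2. adm_vertices V (W @ [u, v]) \<and> adm_indices k mu (I @ [i, j1])
          \<and> adm_indices k mu (I @ [i, j2]) \<longrightarrow>
          cangle (Qpoly V E k mu Z (W @ [u, v]) (I @ [i, j1]))
                 (Qpoly V E k mu Z (W @ [u, v]) (I @ [i, j2])) \<le> \<theta>)
      \<longrightarrow> (\<forall>u v i. adm_vertices V (W @ [u]) \<and> adm_vertices V (W @ [v])
          \<and> adm_indices k mu (I @ [i]) \<longrightarrow>
          Qpoly V E k mu Z (W @ [u]) (I @ [i]) \<noteq> 0 \<and>
          Qpoly V E k mu Z (W @ [v]) (I @ [i]) \<noteq> 0 \<and>
          cangle (Qpoly V E k mu Z (W @ [u]) (I @ [i])) (Qpoly V E k mu Z (W @ [v]) (I @ [i]))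
            \<le> arcsin (\<epsilon> / cos (\<theta> / 2))))
   \<and> ((\<forall>u v1 v2 i j. adm_vertices V (W @ [u, v1]) \<and> adm_vertices V (W @ [u, v2])
          \<and> adm_indices k mu (I @ [i, j]) \<longrightarrow>
          cangle (Qpoly V E k mu Z (W @ [u, v1]) (I @ [i, j]))
                 (Qpoly V E k mu Z (W @ [u, v2]) (I @ [i, j])) \<le> \<theta>)
      \<longrightarrow> (\<forall>u i j. adm_vertices V (W @ [u]) \<and> adm_indices k mu (I @ [i])
          \<and> adm_indices k mu (I @ [j]) \<longrightarrow>
          Qpoly V E k mu Z (W @ [u]) (I @ [i]) \<noteq> 0 \<and>
          Qpoly V E k mu Z (W @ [u]) (I @ [j]) \<noteq> 0 \<and>
          cangle (Qpoly V E k mu Z (W @ [u]) (I @ [i])) (Qpoly V E k mu Z (W @ [u]) (I @ [j]))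
            \<le> arcsin (\<epsilon> / cos (\<theta> / 2))))"
proof -
  have fin: "finite V" using G by (simp add: simple_graph_def)
  have swap_close: "Qpoly V E k mu Z (W @ [u, v]) (I @ [i, j]) \<noteq> 0 \<and>
      norm (Qpoly V E k mu Z (W @ [u, v]) (I @ [j, i]) - Qpoly V E k mu Z (W @ [u, v]) (I @ [i, j]))
        \<le> \<epsilon> * norm (Qpoly V E k mu Z (W @ [u, v]) (I @ [i, j]))"
    if "adm_vertices V (W @ [u, v])" "adm_indices k mu (I @ [i, j])" for u v i j
    using main[OF that] main[OF that(1), of j i] that(2) adm_indices_swap[of k mu I i j]
      norm_diff_le_if_norm_div_sub_1_le by blast
  note assms' = fin M len th less_imp_le[OF eps] epsth swap_close
  show ?thesis
    using Qpoly_vertex_angle_le[OF assms'] Qpoly_index_angle_le[OF assms'] by blast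
qed

end
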